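(* In the Setting A below, suppose Assumption A2 holds. Then for every $k\in[K]$, $$\mathbb{E}\big[\|(\hat v^k)^{1/2}\|_1\big]\le n\theta,\qquad \mathbb{E}\big[\|m^k\|^2_{(\hat v^k)^{-1/2}}\big]\le\frac{\sqrt n\,(\theta+\hat P^k_z/\theta)}{(1-\beta_2)^{1/2}}.$$
   Context: Setting A. Problem: $\min_{x\in X} f_0(x)=\mathbb{E}_{\xi_0}[F_0(x;\xi_0)]$ s.t. $f_i(x)=\mathbb{E}_{\xi_i}[F_i(x;\xi_i)]\le0$, $i\in[M]$, where $X\subseteq\mathbb{R}^n$ is compact convex and $f_0,\dots,f_M$ are convex real-valued on $X$. Let $\mathbf f(x)=(f_1(x),\dots,f_M(x))^\top$, Lagrangian $\mathcal L(x,z)=f_0(x)+z^\top\mathbf f(x)$, and dual function $d(z)=\min_{x\in X}\mathcal L(x,z)$ for $z\ge0$. Vector operations $|x|$, $x^p$, $x/y$, $\max\{x,y\}$ are elementwise, with convention $0/0=0$; $[x]_+=\max\{x,0\}$; for $v\ge0$, $\langle x,y\rangle_v=\sum_i v_ix_iy_i$, $\|x\|_v^2=\langle x,x\rangle_v$, and $\mathrm{proj}_{X,v}(y)=\arg\min_{x\in X}\|x-y\|_v^2$; $\|\cdot\|$ is the Euclidean norm. Algorithm APriD: fix an integer $K$, $\beta_1,\beta_2\in(0,1)$, $\theta>0$, non-increasing step sizes $\alpha_1\ge\cdots\ge\alpha_K>0$, and $\rho_1>0$. Set $\eta_1=\alpha_1/(1-\beta_1)$ if $\alpha_k=\alpha_1$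 for all $k\in[K]$, else $\eta_1=\sum_{i=1}^K\alpha_i\beta_1^{i-1}$; for $k\ge2$ set $\eta_k=(\eta_{k-1}-\alpha_{k-1})/\beta_1$ and $\rho_k=\rho_{k-1}/(\beta_1+\alpha_{k-1}/\eta_k)$. Choose $x^1\in X$, $z^1\ge0$, $m^0=v^0=\hat v^0=0\in\mathbb{R}^n$. For $k=1,\dots,K$: obtain a random vector $(u^k,w^k)\in\mathbb{R}^n\times\mathbb{R}^M$ from a stochastic subgradient oracle of $\mathcal L$ at $(x^k,z^k)$, and set $m^k=\beta_1m^{k-1}+(1-\beta_1)u^k$; $\hat u^k=u^k/\max\{1,\|u^k\|/\theta\}$; $v^k=\beta_2v^{k-1}+(1-\beta_2)(\hat u^k)^2$; $\hat v^k=\max\{\hat v^{k-1},v^k\}$; $x^{k+1}=\mathrm{proj}_{X,(\hat v^k)^{1/2}}\big(x^k-\alpha_km^k/(\hat v^k)^{1/2}\big)$; $z^{k+1}=[z^k+\rho_kw^k]_+$. $\mathcal H^k$ denotes the history $\{x^1,z^1,\dots,x^k,z^k\}$. Assumption A1: there is $B$ with $\|x_1-x_2\|_\infty\le B$ for all $x_1,x_2\in X$. Assumption A2: there are constants $P,Q,F$ such that for all $k\in[K]$: $\mathbb{E}[u^k\mid\mathcal H^k]\in\partial_x\mathcal L(x^k,z^k)$, $\mathbb{E}[\|u^k\|^2]\le P\,\mathbb{E}[\|z^k\|^2]+Q$, $\mathbb{E}[w^k\mid\mathcal H^k]=\mathbf f(x^k)$, $\mathbb{E}[\|w^k\|^2]\le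 F^2$. Define $\hat P^k_z=P\max_{j\in[k]}\mathbb{E}[\|z^j\|^2]+Q$. Assumption A3: there is $(x^*,z^* )$ with $x^*\in X$ satisfying $0\in\partial f_0(x^* )+\mathcal N_X(x^* )+\sum_{i=1}^Mz_i^*\partial f_i(x^* )$, $f_i(x^* )\le0$, $z_i^*\ge0$, $z_i^*f_i(x^* )=0$ for $i\in[M]$ ($\mathcal N_X$ is the normal cone). *)

theory Defs
  imports "HOL-Analysis.Analysis" "HOL-Probability.Probability"
begin

definition wproj :: "(real^'n) set \<Rightarrow> real^'n \<Rightarrow> real^'n \<Rightarrow> real^'n" where
  "wproj X v y = (SOME x. is_arg_min (\<lambda>x. \<Sum>i\<in>UNIV. v$i * (x$i - y$i)^2) (\<lambda>x. x \<in> X) x)"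

definition eta1 :: "nat \<Rightarrow> (nat \<Rightarrow> real) \<Rightarrow> real \<Rightarrow> real" where
  "eta1 K \<alpha> \<beta>1 = (if (\<forall>k\<in>{1..K}. \<alpha> k = \<alpha> 1) then \<alpha> 1 / (1 - \<beta>1)
                   else (\<Sum>i=1..K. \<alpha> i * \<beta>1 ^ (i - 1)))"

text \<open>eta_rho K alpha beta1 rho1 j = (eta_{j+1}, rho_{j+1}).\<close>
primrec eta_rho :: "nat \<Rightarrow> (nat \<Rightarrow> real) \<Rightarrow> real \<Rightarrow> real \<Rightarrow> nat \<Rightarrow> real \<times> real" where
  "eta_rho K \<alpha> \<beta>1 \<rho>1 0 = (eta1 K \<alpha> \<beta>1, \<rho>1)"
| "eta_rho K \<alpha> \<beta>1 \<rho>1 (Suc j) =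
     (let (\<eta>, \<rho>) = eta_rho K \<alpha> \<beta>1 \<rho>1 j;
          \<eta>' = (\<eta> - \<alpha> (Suc j)) / \<beta>1
      in (\<eta>', \<rho> / (\<beta>1 + \<alpha> (Suc j) / \<eta>')))"

definition rho :: "nat \<Rightarrow> (nat \<Rightarrow> real) \<Rightarrow> real \<Rightarrow> real \<Rightarrow> nat \<Rightarrow> real" where
  "rho K \<alpha> \<beta>1 \<rho>1 k = snd (eta_rho K \<alpha> \<beta>1 \<rho>1 (k - 1))"

text \<open>APriD along one sample path (u^k, w^k)_k.
  apd_state ... j = (x^{j+1}, z^{j+1}, m^j, v^j, vhat^j); apd_state ... 0 = (x^1, z^1, 0, 0, 0).
  Division by zero yields 0 in Isabelle, matching the convention 0/0 = 0.\<close>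
primrec apd_state :: "nat \<Rightarrow> (real^'n) set \<Rightarrow> (nat \<Rightarrow> real) \<Rightarrow> real \<Rightarrow> real \<Rightarrow> real \<Rightarrow> real
    \<Rightarrow> real^'n \<Rightarrow> real^'m \<Rightarrow> (nat \<Rightarrow> real^'n) \<Rightarrow> (nat \<Rightarrow> real^'m) \<Rightarrow> nat
    \<Rightarrow> (real^'n) \<times> (real^'m) \<times> (real^'n) \<times> (real^'n) \<times> (real^'n)" where
  "apd_state K X \<alpha> \<beta>1 \<beta>2 \<theta> \<rho>1 x1 z1 u w 0 = (x1, z1, 0, 0, 0)"
| "apd_state K X \<alpha> \<beta>1 \<beta>2 \<theta> \<rho>1 x1 z1 u w (Suc j) =
     (let (x, z, m, v, vh) = apd_state K X \<alpha> \<beta>1 \<beta>2 \<theta> \<rho>1 x1 z1 u w j;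
          k = Suc j;
          m' = \<beta>1 *\<^sub>R m + (1 - \<beta>1) *\<^sub>R u k;
          uh = (1 / max 1 (norm (u k) / \<theta>)) *\<^sub>R u k;
          v' = \<beta>2 *\<^sub>R v + (1 - \<beta>2) *\<^sub>R (\<chi> i. (uh$i)^2);
          vh' = (\<chi> i. max (vh$i) (v'$i));
          sq = (\<chi> i. sqrt (vh'$i));
          x' = wproj X sq (\<chi> i. x$i - \<alpha> k * m'$i / sq$i);
          z' = (\<chi> i. max 0 (z$i + rho K \<alpha> \<beta>1 \<rho>1 k * w k $ i))
      in (x', z', m', v', vh'))"

definition apd_path where
  "apd_path K X \<alpha> \<beta>1 \<beta>2 \<theta> \<rho>1 x1 z1 (u :: nat \<Rightarrow> 'w \<Rightarrow> real^'n) (w :: nat \<Rightarrow> 'w \<Rightarrow> real^'m) j \<omega>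
     = apd_state K X \<alpha> \<beta>1 \<beta>2 \<theta> \<rho>1 x1 z1 (\<lambda>i. u i \<omega>) (\<lambda>i. w i \<omega>) j"

definition apd_x where
  "apd_x K X \<alpha> \<beta>1 \<beta>2 \<theta> \<rho>1 x1 z1 u w k \<omega> = fst (apd_path K X \<alpha> \<beta>1 \<beta>2 \<theta> \<rho>1 x1 z1 u w (k - 1) \<omega>)"
definition apd_z where
  "apd_z K X \<alpha> \<beta>1 \<beta>2 \<theta> \<rho>1 x1 z1 u w k \<omega> = fst (snd (apd_path K X \<alpha> \<beta>1 \<beta>2 \<theta> \<rho>1 x1 z1 u w (k - 1) \<omega>))"
definition apd_m where
  "apd_m K X \<alpha> \<beta>1 \<beta>2 \<theta> \<rho>1 x1 z1 u w k \<omega> = fst (snd (snd (apd_path K X \<alpha> \<beta>1 \<beta>2 \<theta> \<rho>1 x1 z1 u w k \<omega>)))"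
definition apd_vhat where
  "apd_vhat K X \<alpha> \<beta>1 \<beta>2 \<theta> \<rho>1 x1 z1 u w k \<omega> = snd (snd (snd (snd (apd_path K X \<alpha> \<beta>1 \<beta>2 \<theta> \<rho>1 x1 z1 u w k \<omega>))))"

definition lagr :: "(real^'n \<Rightarrow> real) \<Rightarrow> (real^'n \<Rightarrow> real^'m) \<Rightarrow> real^'n \<Rightarrow> real^'m \<Rightarrow> real" where
  "lagr f0 f x z = f0 x + z \<bullet> f x"

definition subdiff_x :: "(real^'n) set \<Rightarrow> (real^'n \<Rightarrow> real) \<Rightarrow> (real^'n \<Rightarrow> real^'m)
    \<Rightarrow> real^'n \<Rightarrow> real^'m \<Rightarrow> (real^'n) set" where
  "subdiff_x X f0 f x z = {g. \<forall>y\<in>X. lagr f0 f y z \<ge> lagr f0 f x z + g \<bullet> (y - x)}"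

definition hist :: "'w measure \<Rightarrow> (nat \<Rightarrow> 'w \<Rightarrow> real^'n) \<Rightarrow> (nat \<Rightarrow> 'w \<Rightarrow> real^'m) \<Rightarrow> nat \<Rightarrow> 'w measure" where
  "hist Mp xs zs k = sigma (space Mp)
     ((\<Union>j\<in>{1..k}. {xs j -` A \<inter> space Mp | A. A \<in> sets borel}) \<union>
      (\<Union>j\<in>{1..k}. {zs j -` A \<inter> space Mp | A. A \<in> sets borel}))"

end

theory Submission
  imports Defs
begin

text \<open>Clipping keeps every coordinate of the clipped gradient below \<theta>, so the averaged and
  maximised second moments stay in [0, \<theta>^2] and the first bound is pointwise. The running
  maximum dominates (1 - \<beta>2) times each squared clipped gradient seen so far, so dividing a
  squared gradient by its square root costs at most the clipping factor max 1 (\<parallel>u\<parallel> / \<theta>);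
  Cauchy--Schwarz and AM--GM turn this into \<surd>n (\<theta> + \<parallel>u\<parallel>^2 / \<theta>) / \<surd>(1 - \<beta>2). The momentum
  is a sub-convex combination of past gradients, so by Jensen the same bound holds for it after
  taking expectations and using E \<parallel>u_j\<parallel>^2 \<le> P E \<parallel>z_j\<parallel>^2 + Q.\<close>

definition clip :: "real \<Rightarrow> real^'n \<Rightarrow> real^'n" where
  "clip \<theta> u = (1 / max 1 (norm u / \<theta>)) *\<^sub>R u"

lemma norm_clip_le:
  assumes "0 < \<theta>"
  shows "norm (clip \<theta> u) \<le> \<theta>"
proof (cases "norm u \<le> \<theta>")
  case True
  then show ?thesis using assms by (simp add: clip_def)
next
  case False
  then have "max 1 (norm u / \<theta>) = norm u / \<theta>" using assms by (simp add: field_simps)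
  then show ?thesis using False assms by (simp add: clip_def)
qed

lemma clip_component_sq_le: "0 < \<theta> \<Longrightarrow> (clip \<theta> u $ i)\<^sup>2 \<le> \<theta>\<^sup>2"
  using norm_clip_le component_le_norm_cart[of "clip \<theta> u" i]
  by (metis abs_le_square_iff abs_of_pos order_trans)

lemma max_one_div_mult_le:
  fixes t \<theta> :: real
  assumes "0 < \<theta>" and "0 \<le> t"
  shows "max 1 (t / \<theta>) * t \<le> \<theta> + t\<^sup>2 / \<theta>"
proof (cases "t \<le> \<theta>")
  case True
  then show ?thesis using assms by (simp add: add_increasing2 divide_le_eq)
next
  case False
  then show ?thesis using assms by (simp add: power2_eq_square)
qed

lemma sum_abs_le_sqrt_card_mult_norm:
  fixes u :: "real^'n"
  shows "(\<Sum>i\<in>UNIV. \<bar>u$i\<bar>) \<le> sqrt (real CARD('n)) * norm u"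
proof -
  define a :: "real^'n" where "a = (\<chi> i. \<bar>u$i\<bar>)"
  define ones :: "real^'n" where "ones = (\<chi> i. 1)"
  have "a \<bullet> ones = (\<Sum>i\<in>UNIV. \<bar>u$i\<bar>)" by (simp add: a_def ones_def inner_vec_def)
  moreover have "norm a = norm u" by (simp add: a_def norm_vec_def)
  moreover have "norm ones = sqrt (real CARD('n))"
    by (simp add: norm_eq_sqrt_inner ones_def inner_vec_def)
  ultimately show ?thesis using norm_cauchy_schwarz[of a ones] by (simp add: mult.commute)
qed

lemma sum_sq_div_sqrt_le_of_clip:
  fixes u vh :: "real^'n"
  assumes "0 < \<theta>" and "\<beta>2 < 1"
    and dom: "\<And>i. (1 - \<beta>2) * (clip \<theta> u $ i)\<^sup>2 \<le> vh $ i"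
  shows "(\<Sum>i\<in>UNIV. (u $ i)\<^sup>2 / sqrt (vh $ i))
           \<le> sqrt (real CARD('n)) * (\<theta> + (norm u)\<^sup>2 / \<theta>) / sqrt (1 - \<beta>2)"
proof -
  define s where "s = max 1 (norm u / \<theta>)"
  define c where "c = sqrt (1 - \<beta>2)"
  have "s \<ge> 1" and "c > 0" using assms by (auto simp: s_def c_def)
  have coord: "(u $ i)\<^sup>2 / sqrt (vh $ i) \<le> s * \<bar>u$i\<bar> / c" for i
  proof (cases "u$i = 0")
    case False
    have "sqrt ((1 - \<beta>2) * (u$i / s)\<^sup>2) \<le> sqrt (vh $ i)"
      using dom[of i] by (simp add: clip_def s_def divide_inverse mult.commute)
    then have le: "c * (\<bar>u$i\<bar> / s) \<le> sqrt (vh $ i)"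
      using \<open>s \<ge> 1\<close> by (simp add: c_def real_sqrt_mult)
    have pos: "0 < c * (\<bar>u$i\<bar> / s)" using \<open>c > 0\<close> \<open>s \<ge> 1\<close> False by simp
    have "0 < sqrt (vh $ i) * (c * (\<bar>u$i\<bar> / s))"
      using le pos by (metis mult_pos_pos order_less_le_trans)
    then have "(u $ i)\<^sup>2 / sqrt (vh $ i) \<le> (u $ i)\<^sup>2 / (c * (\<bar>u$i\<bar> / s))"
      using divide_left_mono[OF le zero_le_power2] by blast
    also have "\<dots> = s * \<bar>u$i\<bar> / c"
      using False \<open>s \<ge> 1\<close> \<open>c > 0\<close> by (simp add: field_simps power2_eq_square abs_mult_self_eq)
    finally show ?thesis .
  qed simp
  have "(\<Sum>i\<in>UNIV. (u $ i)\<^sup>2 / sqrt (vh $ i)) \<le> s * (\<Sum>i\<in>UNIV. \<bar>u$i\<bar>) / c"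
    using sum_mono[of UNIV, OF coord] by (simp add: sum_divide_distrib sum_distrib_left)
  also have "\<dots> \<le> sqrt (real CARD('n)) * (s * norm u) / c"
    using sum_abs_le_sqrt_card_mult_norm[of u] \<open>s \<ge> 1\<close> \<open>c > 0\<close>
    by (simp add: divide_right_mono mult.left_commute)
  also have "\<dots> \<le> sqrt (real CARD('n)) * (\<theta> + (norm u)\<^sup>2 / \<theta>) / c"
    using max_one_div_mult_le[of \<theta> "norm u"] assms \<open>c > 0\<close>
    by (intro divide_right_mono mult_left_mono) (auto simp: s_def)
  finally show ?thesis by (simp add: c_def)
qed

lemma sum_geometric_weights:
  fixes \<beta> :: real
  shows "(\<Sum>j=1..k. (1 - \<beta>) * \<beta>^(k - j)) = 1 - \<beta>^k"
  by (simp add: one_diff_power_eq' sum.atLeast1_atMost_eq sum_distrib_left)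

context
  fixes K :: nat and X :: "(real^'n) set" and \<alpha> :: "nat \<Rightarrow> real" and \<beta>1 \<beta>2 \<theta> \<rho>1 :: real
    and x1 :: "real^'n" and z1 :: "real^'m" and u :: "nat \<Rightarrow> real^'n" and w :: "nat \<Rightarrow> real^'m"
begin

abbreviation "path_m j \<equiv> fst (snd (snd (apd_state K X \<alpha> \<beta>1 \<beta>2 \<theta> \<rho>1 x1 z1 u w j)))"
abbreviation "path_v j \<equiv> fst (snd (snd (snd (apd_state K X \<alpha> \<beta>1 \<beta>2 \<theta> \<rho>1 x1 z1 u w j))))"
abbreviation "path_vhat j \<equiv> snd (snd (snd (snd (apd_state K X \<alpha> \<beta>1 \<beta>2 \<theta> \<rho>1 x1 z1 u w j))))"

lemma path_moments_Suc:
  "path_m (Suc j) = \<beta>1 *\<^sub>R path_m j + (1 - \<beta>1) *\<^sub>R u (Suc j)"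
  "path_v (Suc j) = \<beta>2 *\<^sub>R path_v j + (1 - \<beta>2) *\<^sub>R (\<chi> i. (clip \<theta> (u (Suc j)) $ i)\<^sup>2)"
  "path_vhat (Suc j) = (\<chi> i. max (path_vhat j $ i) (path_v (Suc j) $ i))"
  by (cases "apd_state K X \<alpha> \<beta>1 \<beta>2 \<theta> \<rho>1 x1 z1 u w j"; simp add: Let_def clip_def)+

declare apd_state.simps(2) [simp del]

lemma path_v_vhat_bounded:
  assumes "0 \<le> \<beta>2" "\<beta>2 \<le> 1" "0 < \<theta>"
  shows "0 \<le> path_v k $ i \<and> path_v k $ i \<le> \<theta>\<^sup>2 \<and> 0 \<le> path_vhat k $ i \<and> path_vhat k $ i \<le> \<theta>\<^sup>2"
proof (induction k)
  case (Suc k)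
  define g where "g = (clip \<theta> (u (Suc k)) $ i)\<^sup>2"
  have "0 \<le> g" "g \<le> \<theta>\<^sup>2" using clip_component_sq_le[OF \<open>0 < \<theta>\<close>] by (auto simp: g_def)
  have sec: "path_v (Suc k) $ i = \<beta>2 * path_v k $ i + (1 - \<beta>2) * g"
    by (simp add: path_moments_Suc g_def)
  have "\<beta>2 * path_v k $ i + (1 - \<beta>2) * g \<le> \<beta>2 * \<theta>\<^sup>2 + (1 - \<beta>2) * \<theta>\<^sup>2"
    using Suc.IH \<open>g \<le> \<theta>\<^sup>2\<close> assms by (intro add_mono mult_left_mono) auto
  then have "path_v (Suc k) $ i \<le> \<theta>\<^sup>2" using sec by (simp add: algebra_simps)
  moreover have "0 \<le> path_v (Suc k) $ i" using sec Suc.IH \<open>0 \<le> g\<close> assms by simp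
  ultimately show ?case
    using Suc.IH by (simp add: path_moments_Suc(3))
qed simp

lemma path_vhat_ge_clip:
  assumes "0 \<le> \<beta>2" "\<beta>2 \<le> 1" "0 < \<theta>" and "j \<in> {1..k}"
  shows "(1 - \<beta>2) * (clip \<theta> (u j) $ i)\<^sup>2 \<le> path_vhat k $ i"
  using \<open>j \<in> {1..k}\<close>
proof (induction k)
  case (Suc k)
  have "(1 - \<beta>2) * (clip \<theta> (u (Suc k)) $ i)\<^sup>2 \<le> path_v (Suc k) $ i"
    using path_v_vhat_bounded[OF assms(1-3), of k i] assms by (simp add: path_moments_Suc)
  then show ?case
    using Suc by (cases "j = Suc k") (auto simp: path_moments_Suc le_max_iff_disj)
qed simp

lemma path_m_sq_le:
  assumes "0 \<le> \<beta>1" "\<beta>1 \<le> 1"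
  shows "(path_m k $ i)\<^sup>2 \<le> (\<Sum>j=1..k. (1 - \<beta>1) * \<beta>1^(k - j) * (u j $ i)\<^sup>2)"
proof (induction k)
  case (Suc k)
  let ?m = "path_m k $ i" and ?g = "u (Suc k) $ i"
  have "(path_m (Suc k) $ i)\<^sup>2 = (\<beta>1 * ?m + (1 - \<beta>1) * ?g)\<^sup>2"
    by (simp add: path_moments_Suc)
  also have "\<dots> \<le> \<beta>1 * ?m\<^sup>2 + (1 - \<beta>1) * ?g\<^sup>2"
    using convex_onD[OF convex_power2, of "1 - \<beta>1" ?m ?g] assms by simp
  also have "\<dots> \<le> \<beta>1 * (\<Sum>j=1..k. (1 - \<beta>1) * \<beta>1^(k - j) * (u j $ i)\<^sup>2) + (1 - \<beta>1) * ?g\<^sup>2"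
    using Suc.IH assms by (simp add: mult_left_mono)
  also have "\<dots> = (\<Sum>j=1..Suc k. (1 - \<beta>1) * \<beta>1^(Suc k - j) * (u j $ i)\<^sup>2)"
    unfolding sum_distrib_left by (simp, rule sum.cong) (auto simp: Suc_diff_le)
  finally show ?case .
qed simp

lemma sum_sqrt_path_vhat_le:
  assumes "0 \<le> \<beta>2" "\<beta>2 \<le> 1" "0 < \<theta>"
  shows "(\<Sum>i\<in>UNIV. \<bar>sqrt (path_vhat k $ i)\<bar>) \<le> real CARD('n) * \<theta>"
proof -
  have "\<bar>sqrt (path_vhat k $ i)\<bar> \<le> \<theta>" for i
    using path_v_vhat_bounded[OF assms, of k i] real_sqrt_le_mono[of _ "\<theta>\<^sup>2"] assms by auto
  then show ?thesis using sum_mono[of "UNIV :: 'n set" _ "\<lambda>_. \<theta>"] by simp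
qed

lemma path_weighted_m_le:
  assumes "0 \<le> \<beta>1" "\<beta>1 \<le> 1" "0 \<le> \<beta>2" "\<beta>2 < 1" "0 < \<theta>"
  shows "(\<Sum>i\<in>UNIV. (path_m k $ i)\<^sup>2 / sqrt (path_vhat k $ i))
    \<le> (\<Sum>j=1..k. (1 - \<beta>1) * \<beta>1^(k - j) *
                  (sqrt (real CARD('n)) * (\<theta> + (norm (u j))\<^sup>2 / \<theta>) / sqrt (1 - \<beta>2)))"
proof -
  let ?c = "\<lambda>j. (1 - \<beta>1) * \<beta>1^(k - j)"
  have "(\<Sum>i\<in>UNIV. (path_m k $ i)\<^sup>2 / sqrt (path_vhat k $ i))
      \<le> (\<Sum>i\<in>UNIV. (\<Sum>j=1..k. ?c j * (u j $ i)\<^sup>2) / sqrt (path_vhat k $ i))"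
    using path_m_sq_le path_v_vhat_bounded assms
    by (intro sum_mono divide_right_mono) (auto simp: mult.assoc)
  also have "\<dots> = (\<Sum>j=1..k. ?c j * (\<Sum>i\<in>UNIV. (u j $ i)\<^sup>2 / sqrt (path_vhat k $ i)))"
    by (simp add: sum_divide_distrib sum_distrib_left sum.swap[of _ UNIV] mult.assoc)
  also have "\<dots> \<le> (\<Sum>j=1..k. ?c j *
                  (sqrt (real CARD('n)) * (\<theta> + (norm (u j))\<^sup>2 / \<theta>) / sqrt (1 - \<beta>2)))"
    using assms path_vhat_ge_clip
    by (intro sum_mono mult_left_mono sum_sq_div_sqrt_le_of_clip) auto
  finally show ?thesis .
qed

end

lemma (in prob_space) nn_integral_le_const:
  assumes "\<And>\<omega>. f \<omega> \<le> c"
  shows "(\<integral>\<^sup>+\<omega>. ennreal (f \<omega>) \<partial>M) \<le> ennreal c"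
proof -
  have "(\<integral>\<^sup>+\<omega>. ennreal (f \<omega>) \<partial>M) \<le> (\<integral>\<^sup>+\<omega>. ennreal c \<partial>M)"
    using assms by (intro nn_integral_mono ennreal_leI)
  then show ?thesis by (simp add: emeasure_space_1)
qed

lemma (in prob_space) nn_integral_le_of_sub_convex_comb:
  assumes "finite J" and c: "\<And>j. j \<in> J \<Longrightarrow> 0 \<le> c j" "sum c J \<le> 1"
    and g: "\<And>j. j \<in> J \<Longrightarrow> integrable M (g j)" "\<And>j \<omega>. j \<in> J \<Longrightarrow> 0 \<le> g j \<omega>"
      "\<And>j. j \<in> J \<Longrightarrow> expectation (g j) \<le> C"
    and f: "\<And>\<omega>. f \<omega> \<le> (\<Sum>j\<in>J. c j * g j \<omega>)"
  shows "(\<integral>\<^sup>+\<omega>. ennreal (f \<omega>) \<partial>M) \<le> ennreal C"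
proof -
  let ?h = "\<lambda>\<omega>. \<Sum>j\<in>J. c j * g j \<omega>"
  have "(\<integral>\<^sup>+\<omega>. ennreal (f \<omega>) \<partial>M) \<le> (\<integral>\<^sup>+\<omega>. ennreal (?h \<omega>) \<partial>M)"
    using f by (intro nn_integral_mono ennreal_leI)
  also have "\<dots> = ennreal (expectation ?h)"
    using g c by (intro nn_integral_eq_integral AE_I2 sum_nonneg mult_nonneg_nonneg) auto
  also have "expectation ?h = (\<Sum>j\<in>J. c j * expectation (g j))"
    using g by (simp add: Bochner_Integration.integral_sum)
  also have "\<dots> \<le> (\<Sum>j\<in>J. c j * C)"
    using c g by (intro sum_mono mult_left_mono) auto
  also have "ennreal (\<dots>) \<le> ennreal C"
  proof (cases "J = {}")
    case False
    then obtain j where "j \<in> J" by blast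
    then have "0 \<le> C" using g integral_nonneg_AE[of "g j"] by (meson AE_I2 order_trans)
    then show ?thesis
      using c
      by (intro ennreal_leI) (simp add: sum_distrib_right[symmetric] mult_left_le_one_le sum_nonneg)
  qed simp
  finally show ?thesis by (simp add: ennreal_leI)
qed

lemma (in prob_space) nn_integral_path_weighted_m_le:
  fixes u :: "nat \<Rightarrow> 'a \<Rightarrow> real^'n" and w :: "nat \<Rightarrow> 'a \<Rightarrow> real^'m"
  assumes "0 \<le> \<beta>1" "\<beta>1 \<le> 1" "0 \<le> \<beta>2" "\<beta>2 < 1" "0 < \<theta>"
    and moment: "\<And>j. j \<in> {1..k} \<Longrightarrow>
      integrable M (\<lambda>\<omega>. (norm (u j \<omega>))\<^sup>2) \<and> expectation (\<lambda>\<omega>. (norm (u j \<omega>))\<^sup>2) \<le> B"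
  shows "(\<integral>\<^sup>+\<omega>. ennreal (\<Sum>i\<in>UNIV.
            (path_m K X \<alpha> \<beta>1 \<beta>2 \<theta> \<rho>1 x1 z1 (\<lambda>j. u j \<omega>) (\<lambda>j. w j \<omega>) k $ i)\<^sup>2
              / sqrt (path_vhat K X \<alpha> \<beta>1 \<beta>2 \<theta> \<rho>1 x1 z1 (\<lambda>j. u j \<omega>) (\<lambda>j. w j \<omega>) k $ i)) \<partial>M)
         \<le> ennreal (sqrt (real CARD('n)) * (\<theta> + B / \<theta>) / sqrt (1 - \<beta>2))"
proof (rule nn_integral_le_of_sub_convex_comb)
  define g where "g = (\<lambda>j \<omega>. sqrt (real CARD('n)) * (\<theta> + (norm (u j \<omega>))\<^sup>2 / \<theta>) / sqrt (1 - \<beta>2))"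
  show "finite {1..k}" by simp
  show "sum (\<lambda>j. (1 - \<beta>1) * \<beta>1^(k - j)) {1..k} \<le> 1"
    using sum_geometric_weights[of \<beta>1 k] assms by simp
  show "0 \<le> (1 - \<beta>1) * \<beta>1^(k - j)" for j using assms by simp
  show "integrable M (g j)" if "j \<in> {1..k}" for j
    using moment[OF that] unfolding g_def by (intro integrable_divide integrable_mult_right) auto
  show "0 \<le> g j \<omega>" for j \<omega> using assms by (simp add: g_def)
  show "expectation (g j) \<le> sqrt (real CARD('n)) * (\<theta> + B / \<theta>) / sqrt (1 - \<beta>2)"
    if "j \<in> {1..k}" for j
    using moment[OF that] assms
    by (simp add: g_def prob_space divide_right_mono mult_left_mono)
  show "(\<Sum>i\<in>UNIV. (path_m K X \<alpha> \<beta>1 \<beta>2 \<theta> \<rho>1 x1 z1 (\<lambda>j. u j \<omega>) (\<lambda>j. w j \<omega>) k $ i)\<^sup>2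
          / sqrt (path_vhat K X \<alpha> \<beta>1 \<beta>2 \<theta> \<rho>1 x1 z1 (\<lambda>j. u j \<omega>) (\<lambda>j. w j \<omega>) k $ i))
        \<le> (\<Sum>j\<in>{1..k}. (1 - \<beta>1) * \<beta>1^(k - j) * g j \<omega>)" for \<omega>
    unfolding g_def using path_weighted_m_le assms by simp
qed

theorem lemma4:
  fixes Mp :: "'w measure"
    and X :: "(real^'n) set"
    and f0 :: "real^'n \<Rightarrow> real" and f :: "real^'n \<Rightarrow> real^'m"
    and K :: nat and \<alpha> :: "nat \<Rightarrow> real" and \<beta>1 \<beta>2 \<theta> \<rho>1 :: real
    and x1 :: "real^'n" and z1 :: "real^'m"
    and u :: "nat \<Rightarrow> 'w \<Rightarrow> real^'n" and w :: "nat \<Rightarrow> 'w \<Rightarrow> real^'m"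
    and P Q F :: real
  defines "xs \<equiv> apd_x K X \<alpha> \<beta>1 \<beta>2 \<theta> \<rho>1 x1 z1 u w"
    and "zs \<equiv> apd_z K X \<alpha> \<beta>1 \<beta>2 \<theta> \<rho>1 x1 z1 u w"
    and "ms \<equiv> apd_m K X \<alpha> \<beta>1 \<beta>2 \<theta> \<rho>1 x1 z1 u w"
    and "vhs \<equiv> apd_vhat K X \<alpha> \<beta>1 \<beta>2 \<theta> \<rho>1 x1 z1 u w"
    and "Phat \<equiv> \<lambda>k. P * Max ((\<lambda>j. \<integral>\<omega>. (norm (apd_z K X \<alpha> \<beta>1 \<beta>2 \<theta> \<rho>1 x1 z1 u w j \<omega>))\<^sup>2 \<partial>Mp) ` {1..k}) + Q"
  assumes "prob_space Mp"
    \<comment> \<open>Setting A\<close>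
    and "compact X" and "convex X"
    and "convex_on X f0" and "\<forall>i. convex_on X (\<lambda>x. f x $ i)"
    and "0 < \<beta>1" and "\<beta>1 < 1" and "0 < \<beta>2" and "\<beta>2 < 1" and "0 < \<theta>"
    and "\<forall>i j. 1 \<le> i \<longrightarrow> i \<le> j \<longrightarrow> j \<le> K \<longrightarrow> \<alpha> j \<le> \<alpha> i"
    and "\<forall>k\<in>{1..K}. 0 < \<alpha> k"
    and "0 < \<rho>1"
    and "x1 \<in> X" and "\<forall>i. 0 \<le> z1 $ i"
    and "\<forall>k\<in>{1..K}. u k \<in> borel_measurable Mp \<and> w k \<in> borel_measurable Mp"
    \<comment> \<open>Assumption A2\<close>
    and "0 \<le> P"
    and "\<forall>k\<in>{1..K}. AE \<omega> in Mp.
           (\<chi> i. real_cond_exp Mp (hist Mp xs zs k) (\<lambda>\<omega>'. u k \<omega>' $ i) \<omega>)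
             \<in> subdiff_x X f0 f (xs k \<omega>) (zs k \<omega>)"
    and "\<forall>k\<in>{1..K}. integrable Mp (\<lambda>\<omega>. (norm (u k \<omega>))\<^sup>2) \<and>
           (\<integral>\<omega>. (norm (u k \<omega>))\<^sup>2 \<partial>Mp) \<le> P * (\<integral>\<omega>. (norm (zs k \<omega>))\<^sup>2 \<partial>Mp) + Q"
    and "\<forall>k\<in>{1..K}. AE \<omega> in Mp.
           (\<chi> i. real_cond_exp Mp (hist Mp xs zs k) (\<lambda>\<omega>'. w k \<omega>' $ i) \<omega>) = f (xs k \<omega>)"
    and "\<forall>k\<in>{1..K}. integrable Mp (\<lambda>\<omega>. (norm (w k \<omega>))\<^sup>2) \<and>
           (\<integral>\<omega>. (norm (w k \<omega>))\<^sup>2 \<partial>Mp) \<le> F\<^sup>2"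
  shows "\<forall>k\<in>{1..K}.
           (\<integral>\<^sup>+\<omega>. ennreal (\<Sum>i\<in>UNIV. \<bar>sqrt (vhs k \<omega> $ i)\<bar>) \<partial>Mp)
              \<le> ennreal (real CARD('n) * \<theta>)
         \<and> (\<integral>\<^sup>+\<omega>. ennreal (\<Sum>i\<in>UNIV. (ms k \<omega> $ i)\<^sup>2 / sqrt (vhs k \<omega> $ i)) \<partial>Mp)
              \<le> ennreal (sqrt (real CARD('n)) * (\<theta> + Phat k / \<theta>) / sqrt (1 - \<beta>2))"
proof
  fix k assume k: "k \<in> {1..K}"
  interpret prob_space Mp by fact
  have vhs: "vhs k \<omega> = path_vhat K X \<alpha> \<beta>1 \<beta>2 \<theta> \<rho>1 x1 z1 (\<lambda>i. u i \<omega>) (\<lambda>i. w i \<omega>) k"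
    and ms: "ms k \<omega> = path_m K X \<alpha> \<beta>1 \<beta>2 \<theta> \<rho>1 x1 z1 (\<lambda>i. u i \<omega>) (\<lambda>i. w i \<omega>) k" for \<omega>
    by (simp_all add: vhs_def ms_def apd_vhat_def apd_m_def apd_path_def)
  have moment: "integrable Mp (\<lambda>\<omega>. (norm (u j \<omega>))\<^sup>2) \<and> expectation (\<lambda>\<omega>. (norm (u j \<omega>))\<^sup>2) \<le> Phat k"
    if j: "j \<in> {1..k}" for j
  proof -
    have "j \<in> {1..K}" using j k by auto
    then have "expectation (\<lambda>\<omega>. (norm (u j \<omega>))\<^sup>2) \<le> P * expectation (\<lambda>\<omega>. (norm (zs j \<omega>))\<^sup>2) + Q"
      and "integrable Mp (\<lambda>\<omega>. (norm (u j \<omega>))\<^sup>2)"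
      using assms(24) by auto
    moreover have "P * expectation (\<lambda>\<omega>. (norm (zs j \<omega>))\<^sup>2) + Q \<le> Phat k"
      unfolding Phat_def zs_def using j \<open>0 \<le> P\<close> by (intro add_right_mono mult_left_mono Max_ge) auto
    ultimately show ?thesis by linarith
  qed
  show "(\<integral>\<^sup>+\<omega>. ennreal (\<Sum>i\<in>UNIV. \<bar>sqrt (vhs k \<omega> $ i)\<bar>) \<partial>Mp) \<le> ennreal (real CARD('n) * \<theta>)
    \<and> (\<integral>\<^sup>+\<omega>. ennreal (\<Sum>i\<in>UNIV. (ms k \<omega> $ i)\<^sup>2 / sqrt (vhs k \<omega> $ i)) \<partial>Mp)
        \<le> ennreal (sqrt (real CARD('n)) * (\<theta> + Phat k / \<theta>) / sqrt (1 - \<beta>2))"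
    unfolding vhs ms using \<open>0 < \<beta>1\<close> \<open>\<beta>1 < 1\<close> \<open>0 < \<beta>2\<close> \<open>\<beta>2 < 1\<close> \<open>0 < \<theta>\<close> moment
    by (intro conjI nn_integral_le_const sum_sqrt_path_vhat_le nn_integral_path_weighted_m_le)
      simp_all
qed

end
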